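(* Fix a problem type (IP, SE or PS), a step $k$ and data $y_k$. Let $P_{k-1},Q_{k-1}\in\bar{\mathcal{P}}_k(\bar{\mathcal{X}})$, $P_k=F_k(P_{k-1})$, $Q_k^*=F_k(Q_{k-1})$, and write $G_P=\int_{\bar{\mathcal{X}}}g(y_k,\bar x)P_{k-1}(d\bar x)$, $G_Q=\int_{\bar{\mathcal{X}}}g(y_k,\bar x)Q_{k-1}(d\bar x)$. Suppose either (H1) there is $\nu\in\bar{\mathcal{M}}(\bar{\mathcal{X}})$ with $P_{k-1}\ll\nu$, $Q_{k-1}\ll\nu$, $$\int g(y_k,\bar x)\sqrt{\tfrac{dP_{k-1}}{d\nu}\tfrac{dQ_{k-1}}{d\nu}}(\bar x)\nu(d\bar x)\ge\int g(y_k,\bar x)\nu(d\bar x)\int\sqrt{\tfrac{dP_{k-1}}{d\nu}\tfrac{dQ_{k-1}}{d\nu}}(\bar x)\nu(d\bar x)$$ and $\int g(y_k,\bar x)\nu(d\bar x)\ge\sqrt{G_PG_Q}$; or (H2) there is $\nu\in\bar{\mathcal{M}}(\bar{\mathcal{X}})$ with $P_{k-1}\ll\nu$, $Q_{k-1}\ll\nu$, $$\int g(y_k,\bar x)\Big(\sqrt{\tfrac{dP_{k-1}}{d\nu}(\bar x)}-\sqrt{\tfrac{dQ_{k-1}}{d\nu}(\bar x)}\Big)^2\nu(d\bar x)\le\int g(y_k,\bar x)\nu(d\bar x)\int\Big(\sqrt{\tfrac{dP_{k-1}}{d\nu}(\bar x)}-\sqrt{\tfrac{dQ_{k-1}}{d\nu}(\bar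 x)}\Big)^2\nu(d\bar x)$$ and $\int g(y_k,\bar x)\nu(d\bar x)\le\sqrt{G_PG_Q}$ (all integrals over $\bar{\mathcal{X}}$). Then $d_H(P_k,Q_k^* )\le d_H(P_{k-1},Q_{k-1})$.
   Context: Problems and notation. $(\mathcal{X},d_{\mathcal{X}})$ is a Polish metric space; in PS also $\mathcal{X}\times\mathcal{W}$; $dx,dw$ are Lebesgue measure and $\lambda$ is Lebesgue measure on $\mathcal{X}\times\mathcal{W}$. IP: measurable likelihood $h(y_k,x)$, $\tilde F_k\mu(dx)=h(y_k,x)\mu(dx)$. SE: transition density $T_k(x_k,x_{k-1})$ (density in $x_k$), observation density $h_k(y_k,x_k)$, $\tilde F_k\mu(dx)=h_k(y_k,x)(\int T_k(x,x')\mu(dx'))dx$. PS: $T_k(x_k,x_{k-1},w)$, $h_k(y_k,x_k,w)$, for $\mu\ll\lambda$ with density $\pi$, $\tilde F_k\mu(dx,dw)=h_k(y_k,x,w)(\int T_k(x,x',w)\pi(x',w)dx')dxdw$. Evidence $Z_k(\mu)=\tilde F_k\mu(\bar{\mathcal{X}})$; posterior $F_k\mu=\tilde F_k\mu/Z_k(\mu)$. Admissible priors $\bar{\mathcal{P}}_k(\bar{\mathcal{X}})$: IP: probability measures with $0<Z_k(\mu)<\infty$; SE: additionally $\int T_k(x_k,x')\mu(dx')<\infty$ for all $x_k$; PS: $\mu\ll\lambda$, $\int T_k(x_k,x',w)\pi(x',w)dx'<\infty$ for all $x_k,w$, $0<Z_k(\mu)<\infty$. Unified notation: IP: $\bar x=x$,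 $\bar{\mathcal{X}}=\mathcal{X}$, $g(y_k,\bar x)=h(y_k,x)$, $\bar{\mathcal{M}}(\bar{\mathcal{X}})$ = all $\sigma$-finite measures on $\mathcal{X}$. SE: $\bar x=x_{k-1}$, $\bar{\mathcal{X}}=\mathcal{X}$, $g(y_k,\bar x)=\int_{\mathcal{X}}h_k(y_k,x_k)T_k(x_k,x_{k-1})dx_k$, $\bar{\mathcal{M}}$ = all $\sigma$-finite measures on $\mathcal{X}$. PS: $\bar x=(x_{k-1},w)$, $\bar{\mathcal{X}}=\mathcal{X}\times\mathcal{W}$, $g(y_k,\bar x)=\int_{\mathcal{X}}h_k(y_k,x_k,w)T_k(x_k,x_{k-1},w)dx_k$, $\bar{\mathcal{M}}=\{\lambda\}$. Hellinger distance $d_H(\mu,\mu')=\sqrt{\frac12\int(\sqrt{d\mu/d\nu}-\sqrt{d\mu'/d\nu})^2d\nu}$. *)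

theory Defs
  imports "HOL-Probability.Probability"
begin

definition sum_meas :: "'a measure \<Rightarrow> 'a measure \<Rightarrow> 'a measure" where
  "sum_meas M N = measure_of (space M) (sets M) (\<lambda>A. emeasure M A + emeasure N A)"

definition rd :: "'a measure \<Rightarrow> 'a measure \<Rightarrow> 'a \<Rightarrow> real" where
  "rd \<nu> \<mu> x = enn2real (RN_deriv \<nu> \<mu> x)"

definition hellinger_wrt :: "'a measure \<Rightarrow> 'a measure \<Rightarrow> 'a measure \<Rightarrow> real" where
  "hellinger_wrt \<nu> \<mu> \<mu>' =
     sqrt (1/2 * enn2real (\<integral>\<^sup>+x. ennreal ((sqrt (rd \<nu> \<mu> x) - sqrt (rd \<nu> \<mu>' x))\<^sup>2) \<partial>\<nu>))"

text \<open>Hellinger distance, computed w.r.t. the dominating measure mu + mu'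
  (the value does not depend on the dominating measure).\<close>
definition hellinger :: "'a measure \<Rightarrow> 'a measure \<Rightarrow> real" where
  "hellinger \<mu> \<mu>' = hellinger_wrt (sum_meas \<mu> \<mu>') \<mu> \<mu>'"

definition evidence :: "'a measure \<Rightarrow> ennreal" where
  "evidence M = emeasure M (space M)"

definition normalize :: "'a measure \<Rightarrow> 'a measure" where
  "normalize M = density M (\<lambda>_. 1 / evidence M)"

definition hypH1 :: "('a \<Rightarrow> ennreal) \<Rightarrow> 'a measure \<Rightarrow> 'a measure \<Rightarrow> 'a measure \<Rightarrow> bool" where
  "hypH1 g \<nu> P Q \<longleftrightarrow>
     absolutely_continuous \<nu> P \<and> absolutely_continuous \<nu> Q \<and>
     (\<integral>\<^sup>+x. g x * ennreal (sqrt (rd \<nu> P x * rd \<nu> Q x)) \<partial>\<nu>)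
        \<ge> (\<integral>\<^sup>+x. g x \<partial>\<nu>) * (\<integral>\<^sup>+x. ennreal (sqrt (rd \<nu> P x * rd \<nu> Q x)) \<partial>\<nu>) \<and>
     (\<integral>\<^sup>+x. g x \<partial>\<nu>)
        \<ge> ennreal (sqrt (enn2real (\<integral>\<^sup>+x. g x \<partial>P) * enn2real (\<integral>\<^sup>+x. g x \<partial>Q)))"

definition hypH2 :: "('a \<Rightarrow> ennreal) \<Rightarrow> 'a measure \<Rightarrow> 'a measure \<Rightarrow> 'a measure \<Rightarrow> bool" where
  "hypH2 g \<nu> P Q \<longleftrightarrow>
     absolutely_continuous \<nu> P \<and> absolutely_continuous \<nu> Q \<and>
     (\<integral>\<^sup>+x. g x * ennreal ((sqrt (rd \<nu> P x) - sqrt (rd \<nu> Q x))\<^sup>2) \<partial>\<nu>)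
        \<le> (\<integral>\<^sup>+x. g x \<partial>\<nu>) * (\<integral>\<^sup>+x. ennreal ((sqrt (rd \<nu> P x) - sqrt (rd \<nu> Q x))\<^sup>2) \<partial>\<nu>) \<and>
     (\<integral>\<^sup>+x. g x \<partial>\<nu>)
        \<le> ennreal (sqrt (enn2real (\<integral>\<^sup>+x. g x \<partial>P) * enn2real (\<integral>\<^sup>+x. g x \<partial>Q)))"

definition Mbar_borel :: "'a::topological_space measure set" where
  "Mbar_borel = {\<nu>. sigma_finite_measure \<nu> \<and> sets \<nu> = sets borel}"

section \<open>IP: inverse problem\<close>

definition IP_tilde :: "('y \<Rightarrow> 'x::polish_space \<Rightarrow> real) \<Rightarrow> 'y \<Rightarrow> 'x measure \<Rightarrow> 'x measure" where
  "IP_tilde h y \<mu> = density \<mu> (\<lambda>x. ennreal (h y x))"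

definition IP_post :: "('y \<Rightarrow> 'x::polish_space \<Rightarrow> real) \<Rightarrow> 'y \<Rightarrow> 'x measure \<Rightarrow> 'x measure" where
  "IP_post h y \<mu> = normalize (IP_tilde h y \<mu>)"

definition IP_adm :: "('y \<Rightarrow> 'x::polish_space \<Rightarrow> real) \<Rightarrow> 'y \<Rightarrow> 'x measure \<Rightarrow> bool" where
  "IP_adm h y \<mu> \<longleftrightarrow> prob_space \<mu> \<and> sets \<mu> = sets borel \<and>
     0 < evidence (IP_tilde h y \<mu>) \<and> evidence (IP_tilde h y \<mu>) < \<infinity>"

definition IP_g :: "('y \<Rightarrow> 'x::polish_space \<Rightarrow> real) \<Rightarrow> 'y \<Rightarrow> 'x \<Rightarrow> ennreal" where
  "IP_g h y x = ennreal (h y x)"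

definition IP_model :: "('y \<Rightarrow> 'x::polish_space \<Rightarrow> real) \<Rightarrow> 'y \<Rightarrow> bool" where
  "IP_model h y \<longleftrightarrow> (\<forall>x. 0 \<le> h y x) \<and> h y \<in> borel_measurable borel"

section \<open>SE: state estimation (X Euclidean, dx = Lebesgue measure)\<close>

definition SE_tilde :: "('a::euclidean_space \<Rightarrow> 'a \<Rightarrow> real) \<Rightarrow> ('y \<Rightarrow> 'a \<Rightarrow> real) \<Rightarrow> 'y
    \<Rightarrow> 'a measure \<Rightarrow> 'a measure" where
  "SE_tilde T h y \<mu> = density lborel (\<lambda>x. ennreal (h y x) * (\<integral>\<^sup>+x'. ennreal (T x x') \<partial>\<mu>))"

definition SE_post :: "('a::euclidean_space \<Rightarrow> 'a \<Rightarrow> real) \<Rightarrow> ('y \<Rightarrow> 'a \<Rightarrow> real) \<Rightarrow> 'y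
    \<Rightarrow> 'a measure \<Rightarrow> 'a measure" where
  "SE_post T h y \<mu> = normalize (SE_tilde T h y \<mu>)"

definition SE_adm :: "('a::euclidean_space \<Rightarrow> 'a \<Rightarrow> real) \<Rightarrow> ('y \<Rightarrow> 'a \<Rightarrow> real) \<Rightarrow> 'y
    \<Rightarrow> 'a measure \<Rightarrow> bool" where
  "SE_adm T h y \<mu> \<longleftrightarrow> prob_space \<mu> \<and> sets \<mu> = sets borel \<and>
     (\<forall>x. (\<integral>\<^sup>+x'. ennreal (T x x') \<partial>\<mu>) < \<infinity>) \<and>
     0 < evidence (SE_tilde T h y \<mu>) \<and> evidence (SE_tilde T h y \<mu>) < \<infinity>"

definition SE_g :: "('a::euclidean_space \<Rightarrow> 'a \<Rightarrow> real) \<Rightarrow> ('y \<Rightarrow> 'a \<Rightarrow> real) \<Rightarrow> 'y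
    \<Rightarrow> 'a \<Rightarrow> ennreal" where
  "SE_g T h y x' = (\<integral>\<^sup>+xk. ennreal (h y xk * T xk x') \<partial>lborel)"

text \<open>Standing assumptions: T is a transition density (density in its first argument),
  h is a nonnegative measurable observation density.\<close>
definition SE_model :: "('a::euclidean_space \<Rightarrow> 'a \<Rightarrow> real) \<Rightarrow> ('y \<Rightarrow> 'a \<Rightarrow> real) \<Rightarrow> 'y \<Rightarrow> bool" where
  "SE_model T h y \<longleftrightarrow> (\<forall>x x'. 0 \<le> T x x') \<and> (\<lambda>(x, x'). T x x') \<in> borel_measurable borel \<and>
     (\<forall>x'. (\<integral>\<^sup>+x. ennreal (T x x') \<partial>lborel) = 1) \<and>
     (\<forall>x. 0 \<le> h y x) \<and> h y \<in> borel_measurable borel"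

section \<open>PS: joint state-parameter estimation on X \<times> W (lambda = Lebesgue measure)\<close>

definition PS_tilde :: "('a::euclidean_space \<Rightarrow> 'a \<Rightarrow> 'w::euclidean_space \<Rightarrow> real)
    \<Rightarrow> ('y \<Rightarrow> 'a \<Rightarrow> 'w \<Rightarrow> real) \<Rightarrow> 'y \<Rightarrow> ('a \<times> 'w) measure \<Rightarrow> ('a \<times> 'w) measure" where
  "PS_tilde T h y \<mu> = density lborel (\<lambda>(x, w). ennreal (h y x w) *
      (\<integral>\<^sup>+x'. ennreal (T x x' w) * RN_deriv lborel \<mu> (x', w) \<partial>lborel))"

definition PS_post :: "('a::euclidean_space \<Rightarrow> 'a \<Rightarrow> 'w::euclidean_space \<Rightarrow> real)
    \<Rightarrow> ('y \<Rightarrow> 'a \<Rightarrow> 'w \<Rightarrow> real) \<Rightarrow> 'y \<Rightarrow> ('a \<times> 'w) measure \<Rightarrow> ('a \<times> 'w) measure" where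
  "PS_post T h y \<mu> = normalize (PS_tilde T h y \<mu>)"

definition PS_adm :: "('a::euclidean_space \<Rightarrow> 'a \<Rightarrow> 'w::euclidean_space \<Rightarrow> real)
    \<Rightarrow> ('y \<Rightarrow> 'a \<Rightarrow> 'w \<Rightarrow> real) \<Rightarrow> 'y \<Rightarrow> ('a \<times> 'w) measure \<Rightarrow> bool" where
  "PS_adm T h y \<mu> \<longleftrightarrow> prob_space \<mu> \<and> sets \<mu> = sets lborel \<and> absolutely_continuous lborel \<mu> \<and>
     (\<exists>\<pi>\<in>borel_measurable lborel. \<mu> = density lborel \<pi> \<and>
        (\<forall>x w. (\<integral>\<^sup>+x'. ennreal (T x x' w) * \<pi> (x', w) \<partial>lborel) < \<infinity>)) \<and>
     0 < evidence (PS_tilde T h y \<mu>) \<and> evidence (PS_tilde T h y \<mu>) < \<infinity>"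

definition PS_g :: "('a::euclidean_space \<Rightarrow> 'a \<Rightarrow> 'w::euclidean_space \<Rightarrow> real)
    \<Rightarrow> ('y \<Rightarrow> 'a \<Rightarrow> 'w \<Rightarrow> real) \<Rightarrow> 'y \<Rightarrow> 'a \<times> 'w \<Rightarrow> ennreal" where
  "PS_g T h y = (\<lambda>(x', w). \<integral>\<^sup>+xk. ennreal (h y xk w * T xk x' w) \<partial>lborel)"

definition PS_model :: "('a::euclidean_space \<Rightarrow> 'a \<Rightarrow> 'w::euclidean_space \<Rightarrow> real)
    \<Rightarrow> ('y \<Rightarrow> 'a \<Rightarrow> 'w \<Rightarrow> real) \<Rightarrow> 'y \<Rightarrow> bool" where
  "PS_model T h y \<longleftrightarrow> (\<forall>x x' w. 0 \<le> T x x' w) \<and>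
     (\<lambda>(x, x', w). T x x' w) \<in> borel_measurable borel \<and>
     (\<forall>x' w. (\<integral>\<^sup>+x. ennreal (T x x' w) \<partial>lborel) = 1) \<and>
     (\<forall>x w. 0 \<le> h y x w) \<and> (\<lambda>(x, w). h y x w) \<in> borel_measurable borel"

definition Mbar_PS :: "('a::euclidean_space \<times> 'w::euclidean_space) measure set" where
  "Mbar_PS = {lborel}"

end

theory Submission
  imports Defs
begin

(*
  Write BC(P, Q) = int sqrt(p q) dnu for the Bhattacharyya coefficient of P = p nu and Q = q nu,
  so that d_H(P, Q)^2 = 1 - BC(P, Q) whatever the dominating measure nu.  If F and G are the
  unnormalised posterior densities, with evidences Z_P = G_P and Z_Q = G_Q, then
  BC(P_k, Q_k^* ) = int sqrt(F G) / sqrt(Z_P Z_Q), and Cauchy-Schwarz through the transition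
  kernel gives int sqrt(F G) >= int g sqrt(p q) dnu (with equality for IP).  Hence it suffices
  that sqrt(Z_P Z_Q) BC(P, Q) <= int g sqrt(p q) dnu.  Under (H1) this is immediate.  Under (H2)
  it follows from the identities
    int g (sqrt p - sqrt q)^2 dnu = Z_P + Z_Q - 2 int g sqrt(p q) dnu,
    int (sqrt p - sqrt q)^2 dnu = 2 - 2 BC(P, Q)
  together with Z_P + Z_Q >= 2 sqrt(Z_P Z_Q).  Square roots are taken in [0, infinity] (esqrt),
  so that infinite densities and integrals need no special treatment.
*)

section \<open>Square roots of extended nonnegative reals\<close>

definition esqrt :: "ennreal \<Rightarrow> ennreal" where
  "esqrt x = (if x = \<top> then \<top> else ennreal (sqrt (enn2real x)))"

lemma esqrt_ennreal [simp]: "0 \<le> r \<Longrightarrow> esqrt (ennreal r) = ennreal (sqrt r)"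
  by (simp add: esqrt_def)

lemma esqrt_top [simp]: "esqrt \<top> = \<top>"
  by (simp add: esqrt_def)

lemma esqrt_0 [simp]: "esqrt 0 = 0"
  by (simp add: esqrt_def)

lemma esqrt_1 [simp]: "esqrt 1 = 1"
  by (simp add: esqrt_def)

lemma esqrt_mult: "esqrt (a * b) = esqrt a * esqrt b"
  by (cases a; cases b)
    (auto simp: ennreal_mult[symmetric] real_sqrt_mult ennreal_mult_top ennreal_top_mult)

lemma esqrt_mult_self [simp]: "esqrt a * esqrt a = a"
  by (cases a) (simp_all add: ennreal_mult[symmetric])

lemma esqrt_square [simp]: "esqrt (a * a) = a"
  by (simp add: esqrt_mult)

lemma esqrt_mult_mult_self: "esqrt (a * b * (a * c)) = a * esqrt (b * c)"
  by (metis esqrt_mult esqrt_square mult.assoc mult.left_commute)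

lemma esqrt_mono: "a \<le> b \<Longrightarrow> esqrt a \<le> esqrt b"
  by (cases a; cases b) (auto simp: top_unique intro: ennreal_leI)

lemma borel_measurable_esqrt [measurable]:
  assumes [measurable]: "f \<in> borel_measurable M"
  shows "(\<lambda>x. esqrt (f x)) \<in> borel_measurable M"
proof -
  have [measurable]: "{x \<in> space M. f x = \<top>} \<in> sets M"
    by simp
  show ?thesis
    unfolding esqrt_def by measurable
qed

lemma esqrt_mult_eq_sqrt_enn2real:
  "a \<noteq> \<top> \<Longrightarrow> b \<noteq> \<top> \<Longrightarrow> esqrt (a * b) = ennreal (sqrt (enn2real a * enn2real b))"
  by (cases a; cases b) (simp_all add: ennreal_mult[symmetric])

lemma sqrt_diff_square_add_esqrt:
  assumes "a \<noteq> \<top>" "b \<noteq> \<top>"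
  shows "ennreal ((sqrt (enn2real a) - sqrt (enn2real b))\<^sup>2) + 2 * esqrt (a * b) = a + b"
proof -
  obtain r s where r: "a = ennreal r" "0 \<le> r" and s: "b = ennreal s" "0 \<le> s"
    using assms by (cases a; cases b) auto
  have "(sqrt r - sqrt s)\<^sup>2 + 2 * sqrt (r * s) = r + s"
    using r s by (simp add: power2_diff real_sqrt_mult)
  with r(2) s(2) have "ennreal ((sqrt r - sqrt s)\<^sup>2) + 2 * ennreal (sqrt (r * s)) = ennreal (r + s)"
    by (metis ennreal_numeral ennreal_mult' ennreal_plus zero_le_power2 real_sqrt_ge_zero
        mult_nonneg_nonneg zero_le_numeral)
  then show ?thesis
    using r s by (simp add: ennreal_mult[symmetric])
qed

lemma esqrt_mult_le_add: "2 * esqrt (a * b) \<le> a + b"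
proof (cases "a = \<top> \<or> b = \<top>")
  case False
  then show ?thesis
    using sqrt_diff_square_add_esqrt[of a b] by (metis add.commute le_iff_add)
qed auto

lemma nn_integral_esqrt_mult_le:
  assumes [measurable]: "K \<in> borel_measurable M" "f \<in> borel_measurable M" "g \<in> borel_measurable M"
  shows "(\<integral>\<^sup>+x. K x * esqrt (f x * g x) \<partial>M)
    \<le> esqrt ((\<integral>\<^sup>+x. K x * f x \<partial>M) * (\<integral>\<^sup>+x. K x * g x \<partial>M))"
proof -
  have "K x * esqrt (f x * g x) = esqrt (K x * f x) * esqrt (K x * g x)" for x
    by (metis esqrt_mult esqrt_mult_self mult.assoc mult.left_commute)
  then have "(\<integral>\<^sup>+x. K x * esqrt (f x * g x) \<partial>M)\<^sup>2
      = (\<integral>\<^sup>+x. esqrt (K x * f x) * esqrt (K x * g x) \<partial>M)\<^sup>2"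
    by simp
  also have "\<dots> \<le> (\<integral>\<^sup>+x. (esqrt (K x * f x))\<^sup>2 \<partial>M) * (\<integral>\<^sup>+x. (esqrt (K x * g x))\<^sup>2 \<partial>M)"
    by (rule Cauchy_Schwarz_nn_integral) simp_all
  finally have "(\<integral>\<^sup>+x. K x * esqrt (f x * g x) \<partial>M)\<^sup>2
      \<le> (\<integral>\<^sup>+x. K x * f x \<partial>M) * (\<integral>\<^sup>+x. K x * g x \<partial>M)"
    by (simp add: power2_eq_square)
  from esqrt_mono[OF this] show ?thesis
    by (simp add: power2_eq_square)
qed

section \<open>Bhattacharyya coefficient and Hellinger distance\<close>

definition bhattacharyya :: "'a measure \<Rightarrow> ('a \<Rightarrow> ennreal) \<Rightarrow> ('a \<Rightarrow> ennreal) \<Rightarrow> ennreal" where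
  "bhattacharyya M f g = (\<integral>\<^sup>+x. esqrt (f x * g x) \<partial>M)"

lemma bhattacharyya_mult_const:
  assumes "f \<in> borel_measurable M" "g \<in> borel_measurable M"
  shows "bhattacharyya M (\<lambda>x. f x * c) (\<lambda>x. g x * d) = esqrt (c * d) * bhattacharyya M f g"
  unfolding bhattacharyya_def using assms
  by (subst nn_integral_cmult[symmetric]) (simp_all add: esqrt_mult[symmetric] ac_simps)

lemma bhattacharyya_density:
  assumes [measurable]: "u \<in> borel_measurable M" "f \<in> borel_measurable M" "g \<in> borel_measurable M"
  shows "bhattacharyya (density M u) f g = bhattacharyya M (\<lambda>x. u x * f x) (\<lambda>x. u x * g x)"
  unfolding bhattacharyya_def by (simp add: nn_integral_density esqrt_mult_mult_self)

lemma nn_integral_prob_density: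
  assumes "prob_space (density M f)" "f \<in> borel_measurable M"
  shows "(\<integral>\<^sup>+x. f x \<partial>M) = 1"
  using prob_space.emeasure_space_1[OF assms(1)] assms(2) by (simp add: emeasure_density)

lemma bhattacharyya_le_1:
  assumes [measurable]: "f \<in> borel_measurable M" "g \<in> borel_measurable M"
    and "prob_space (density M f)" "prob_space (density M g)"
  shows "bhattacharyya M f g \<le> 1"
  using nn_integral_esqrt_mult_le[of "\<lambda>_. 1" M f g]
  by (simp add: bhattacharyya_def nn_integral_prob_density assms)

lemma nn_integral_weighted_hellinger_identity:
  assumes [measurable]: "w \<in> borel_measurable M" "f \<in> borel_measurable M" "g \<in> borel_measurable M"
    and "AE x in M. f x \<noteq> \<top>" "AE x in M. g x \<noteq> \<top>"
  shows "(\<integral>\<^sup>+x. w x * ennreal ((sqrt (enn2real (f x)) - sqrt (enn2real (g x)))\<^sup>2) \<partial>M)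
      + 2 * (\<integral>\<^sup>+x. w x * esqrt (f x * g x) \<partial>M)
    = (\<integral>\<^sup>+x. w x * f x \<partial>M) + (\<integral>\<^sup>+x. w x * g x \<partial>M)"
proof -
  have "AE x in M. w x * ennreal ((sqrt (enn2real (f x)) - sqrt (enn2real (g x)))\<^sup>2)
      + 2 * (w x * esqrt (f x * g x)) = w x * f x + w x * g x"
    using assms(4,5)
  proof eventually_elim
    case (elim x)
    have "w x * ennreal ((sqrt (enn2real (f x)) - sqrt (enn2real (g x)))\<^sup>2)
          + 2 * (w x * esqrt (f x * g x))
        = w x * (ennreal ((sqrt (enn2real (f x)) - sqrt (enn2real (g x)))\<^sup>2)
          + 2 * esqrt (f x * g x))"
      by (simp add: distrib_left mult.left_commute)
    also have "\<dots> = w x * f x + w x * g x"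
      by (simp add: sqrt_diff_square_add_esqrt[OF elim] distrib_left)
    finally show ?case .
  qed
  then have "(\<integral>\<^sup>+x. w x * ennreal ((sqrt (enn2real (f x)) - sqrt (enn2real (g x)))\<^sup>2)
      + 2 * (w x * esqrt (f x * g x)) \<partial>M) = (\<integral>\<^sup>+x. w x * f x + w x * g x \<partial>M)"
    by (rule nn_integral_cong_AE)
  then show ?thesis
    by (simp add: nn_integral_add nn_integral_cmult)
qed

lemma enn2real_eq_2_minus_double:
  fixes a b :: ennreal
  assumes "a + 2 * b = 2"
  shows "enn2real a = 2 - 2 * enn2real b"
proof -
  have "a \<noteq> \<top>" "b \<noteq> \<top>"
    using assms by (auto simp: ennreal_mult_eq_top_iff)
  then have "enn2real (a + 2 * b) = enn2real a + 2 * enn2real b"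
    by (simp add: enn2real_plus enn2real_mult ennreal_mult_less_top less_top)
  then show ?thesis
    using assms by simp
qed

lemma (in sigma_finite_measure) AE_prob_density_finite:
  assumes "f \<in> borel_measurable M" "prob_space (density M f)"
  shows "AE x in M. f x \<noteq> \<top>"
  using sigma_finite_iff_density_finite[OF assms(1)] prob_space_imp_sigma_finite[OF assms(2)]
  by simp

lemma hellinger_wrt_density:
  assumes "sigma_finite_measure M"
    and [measurable]: "f \<in> borel_measurable M" "g \<in> borel_measurable M"
    and prob: "prob_space (density M f)" "prob_space (density M g)"
  shows "hellinger_wrt M (density M f) (density M g) = sqrt (1 - enn2real (bhattacharyya M f g))"
proof -
  interpret sigma_finite_measure M by fact
  have finite: "AE x in M. f x \<noteq> \<top>" "AE x in M. g x \<noteq> \<top>"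
    using AE_prob_density_finite prob by simp_all
  have "AE x in M. rd M (density M f) x = enn2real (f x)"
    "AE x in M. rd M (density M g) x = enn2real (g x)"
    using RN_deriv_unique[of f] RN_deriv_unique[of g] by (auto simp: rd_def elim: AE_mp)
  then have "(\<integral>\<^sup>+x. ennreal ((sqrt (rd M (density M f) x) - sqrt (rd M (density M g) x))\<^sup>2) \<partial>M)
      = (\<integral>\<^sup>+x. 1 * ennreal ((sqrt (enn2real (f x)) - sqrt (enn2real (g x)))\<^sup>2) \<partial>M)"
    (is "?D = _") by (auto intro!: nn_integral_cong_AE elim: AE_mp)
  then have "?D + 2 * bhattacharyya M f g = 2"
    using nn_integral_weighted_hellinger_identity[of "\<lambda>_. 1" M f g] finite
    by (simp add: bhattacharyya_def nn_integral_prob_density prob one_add_one)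
  then show ?thesis
    unfolding hellinger_wrt_def by (simp add: enn2real_eq_2_minus_double)
qed

lemma sum_meas_density:
  assumes [measurable]: "f \<in> borel_measurable M" "g \<in> borel_measurable M"
  shows "sum_meas (density M f) (density M g) = density M (\<lambda>x. f x + g x)"
proof -
  have "sum_meas (density M f) (density M g)
      = measure_of (space M) (sets M) (emeasure (density M (\<lambda>x. f x + g x)))"
    unfolding sum_meas_def
    by (auto intro!: measure_of_eq sets.space_closed simp: sets.sigma_sets_eq emeasure_density_add)
  then show ?thesis
    using measure_of_of_measure[of "density M (\<lambda>x. f x + g x)"] by simp
qed

lemma ennreal_add_mult_divide_cancel:
  fixes a b :: ennreal
  assumes "a \<noteq> \<top>" "b \<noteq> \<top>"
  shows "(a + b) * (a / (a + b)) = a"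
proof (cases "a + b = 0")
  case False
  then show ?thesis
    using assms by (simp add: ennreal_times_divide mult.commute ennreal_mult_divide_eq)
qed simp

lemma hellinger_density:
  assumes "sigma_finite_measure M"
    and [measurable]: "f \<in> borel_measurable M" "g \<in> borel_measurable M"
    and prob: "prob_space (density M f)" "prob_space (density M g)"
  shows "hellinger (density M f) (density M g) = sqrt (1 - enn2real (bhattacharyya M f g))"
proof -
  interpret sigma_finite_measure M by fact
  have finite: "AE x in M. f x \<noteq> \<top>" "AE x in M. g x \<noteq> \<top>"
    using AE_prob_density_finite prob by simp_all
  (* hellinger is taken w.r.t. density M f + density M g = density M u, relative to which the
     densities are f / u and g / u. *)
  define u where "u x = f x + g x" for x
  have [measurable]: "u \<in> borel_measurable M"
    unfolding u_def by simp
  have cancel_f: "AE x in M. u x * (f x / u x) = f x"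
    using finite by eventually_elim (simp add: u_def ennreal_add_mult_divide_cancel)
  have cancel_g: "AE x in M. u x * (g x / u x) = g x"
    using finite by eventually_elim (metis u_def add.commute ennreal_add_mult_divide_cancel)
  have dens: "density (density M u) (\<lambda>x. f x / u x) = density M f"
    "density (density M u) (\<lambda>x. g x / u x) = density M g"
    using density_cong[OF _ _ cancel_f] density_cong[OF _ _ cancel_g]
    by (simp_all add: density_density_eq)
  have "sigma_finite_measure (density M u)"
    using sigma_finite_iff_density_finite[of u] finite by (auto simp: u_def elim: AE_mp)
  then have "hellinger_wrt (density M u) (density M f) (density M g)
    = sqrt (1 - enn2real (bhattacharyya (density M u) (\<lambda>x. f x / u x) (\<lambda>x. g x / u x)))"
    using hellinger_wrt_density[of "density M u" "\<lambda>x. f x / u x" "\<lambda>x. g x / u x"]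
    by (simp add: dens prob)
  also have "bhattacharyya (density M u) (\<lambda>x. f x / u x) (\<lambda>x. g x / u x) = bhattacharyya M f g"
    using cancel_f cancel_g
    by (simp add: bhattacharyya_density) (auto simp: bhattacharyya_def intro!: nn_integral_cong_AE)
  finally show ?thesis
    by (simp add: hellinger_def sum_meas_density u_def[abs_def])
qed

lemma evidence_density:
  "F \<in> borel_measurable M \<Longrightarrow> evidence (density M F) = (\<integral>\<^sup>+x. F x \<partial>M)"
  by (simp add: evidence_def emeasure_density)

lemma normalize_density:
  assumes "F \<in> borel_measurable M"
  shows "normalize (density M F) = density M (\<lambda>x. F x * (1 / evidence (density M F)))"
  using assms by (simp add: normalize_def density_density_eq)

lemma prob_space_normalize:
  assumes "0 < evidence M" "evidence M < \<top>"
  shows "prob_space (normalize M)"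
proof
  have "emeasure (normalize M) (space M) = 1 / evidence M * evidence M"
    by (simp add: normalize_def emeasure_density_const evidence_def)
  then show "emeasure (normalize M) (space (normalize M)) = 1"
    using assms by (simp add: normalize_def ennreal_divide_times)
qed

lemma prob_space_normalize_density:
  assumes "F \<in> borel_measurable M" "0 < evidence (density M F)" "evidence (density M F) < \<top>"
  shows "prob_space (density M (\<lambda>x. F x * (1 / evidence (density M F))))"
  using prob_space_normalize[OF assms(2,3)] by (simp add: normalize_density[OF assms(1)])

lemma hellinger_normalize_density:
  assumes "sigma_finite_measure L"
    and [measurable]: "F \<in> borel_measurable L" "G \<in> borel_measurable L"
    and Z_F: "0 < evidence (density L F)" "evidence (density L F) < \<top>"
    and Z_G: "0 < evidence (density L G)" "evidence (density L G) < \<top>"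
  shows "hellinger (normalize (density L F)) (normalize (density L G))
      = sqrt (1 - enn2real (esqrt (1 / evidence (density L F) * (1 / evidence (density L G)))
          * bhattacharyya L F G))"
    and "esqrt (1 / evidence (density L F) * (1 / evidence (density L G)))
      * bhattacharyya L F G \<le> 1"
  using prob_space_normalize_density[OF assms(2) Z_F] prob_space_normalize_density[OF assms(3) Z_G]
    bhattacharyya_le_1[OF _ _ prob_space_normalize_density[OF assms(2) Z_F]
      prob_space_normalize_density[OF assms(3) Z_G]]
  by (simp_all add: normalize_density bhattacharyya_mult_const[OF assms(2,3)]
      hellinger_density[OF assms(1)])

locale dominated_priors = sigma_finite_measure \<nu> for \<nu> :: "'a measure" +
  fixes P Q :: "'a measure"
  assumes prob_space_P: "prob_space P" and prob_space_Q: "prob_space Q"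
    and ac_P: "absolutely_continuous \<nu> P" and ac_Q: "absolutely_continuous \<nu> Q"
    and sets_P: "sets P = sets \<nu>" and sets_Q: "sets Q = sets \<nu>"
begin

lemma density_RN_deriv_priors:
  "density \<nu> (RN_deriv \<nu> P) = P" "density \<nu> (RN_deriv \<nu> Q) = Q"
  using density_RN_deriv ac_P sets_P ac_Q sets_Q by simp_all

lemma AE_RN_deriv_priors_finite:
  "AE x in \<nu>. RN_deriv \<nu> P x \<noteq> \<top>" "AE x in \<nu>. RN_deriv \<nu> Q x \<noteq> \<top>"
  using RN_deriv_finite[OF prob_space_imp_sigma_finite[OF prob_space_P] ac_P sets_P]
    RN_deriv_finite[OF prob_space_imp_sigma_finite[OF prob_space_Q] ac_Q sets_Q]
  by simp_all

lemma hellinger_priors: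
  "hellinger P Q = sqrt (1 - enn2real (bhattacharyya \<nu> (RN_deriv \<nu> P) (RN_deriv \<nu> Q)))"
  using hellinger_density[OF sigma_finite_measure_axioms, of "RN_deriv \<nu> P" "RN_deriv \<nu> Q"]
  by (simp add: density_RN_deriv_priors prob_space_P prob_space_Q)

lemma AE_sqrt_rd_mult:
  "AE x in \<nu>. ennreal (sqrt (rd \<nu> P x * rd \<nu> Q x)) = esqrt (RN_deriv \<nu> P x * RN_deriv \<nu> Q x)"
  using AE_RN_deriv_priors_finite
  by eventually_elim (simp add: rd_def esqrt_mult_eq_sqrt_enn2real)

lemma hypH1_imp_evidence_bhattacharyya_le:
  assumes "hypH1 g \<nu> P Q" "(\<integral>\<^sup>+x. g x \<partial>P) \<noteq> \<top>" "(\<integral>\<^sup>+x. g x \<partial>Q) \<noteq> \<top>"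
  shows "esqrt ((\<integral>\<^sup>+x. g x \<partial>P) * (\<integral>\<^sup>+x. g x \<partial>Q)) * bhattacharyya \<nu> (RN_deriv \<nu> P) (RN_deriv \<nu> Q)
    \<le> (\<integral>\<^sup>+x. g x * esqrt (RN_deriv \<nu> P x * RN_deriv \<nu> Q x) \<partial>\<nu>)"
proof -
  have "(\<integral>\<^sup>+x. ennreal (sqrt (rd \<nu> P x * rd \<nu> Q x)) \<partial>\<nu>)
      = bhattacharyya \<nu> (RN_deriv \<nu> P) (RN_deriv \<nu> Q)"
    "(\<integral>\<^sup>+x. g x * ennreal (sqrt (rd \<nu> P x * rd \<nu> Q x)) \<partial>\<nu>)
      = (\<integral>\<^sup>+x. g x * esqrt (RN_deriv \<nu> P x * RN_deriv \<nu> Q x) \<partial>\<nu>)"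
    unfolding bhattacharyya_def using AE_sqrt_rd_mult by (auto intro!: nn_integral_cong_AE)
  then have "(\<integral>\<^sup>+x. g x \<partial>\<nu>) * bhattacharyya \<nu> (RN_deriv \<nu> P) (RN_deriv \<nu> Q)
      \<le> (\<integral>\<^sup>+x. g x * esqrt (RN_deriv \<nu> P x * RN_deriv \<nu> Q x) \<partial>\<nu>)"
    and "esqrt ((\<integral>\<^sup>+x. g x \<partial>P) * (\<integral>\<^sup>+x. g x \<partial>Q)) \<le> (\<integral>\<^sup>+x. g x \<partial>\<nu>)"
    using assms by (simp_all add: hypH1_def esqrt_mult_eq_sqrt_enn2real)
  then show ?thesis
    by (meson mult_right_mono order_trans zero_le)
qed

lemma nn_integral_weighted_hellinger_priors:
  assumes [measurable]: "w \<in> borel_measurable \<nu>"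
  shows "(\<integral>\<^sup>+x. w x * ennreal ((sqrt (rd \<nu> P x) - sqrt (rd \<nu> Q x))\<^sup>2) \<partial>\<nu>)
      + 2 * (\<integral>\<^sup>+x. w x * esqrt (RN_deriv \<nu> P x * RN_deriv \<nu> Q x) \<partial>\<nu>)
    = (\<integral>\<^sup>+x. w x \<partial>P) + (\<integral>\<^sup>+x. w x \<partial>Q)"
  using nn_integral_weighted_hellinger_identity[OF assms _ _ AE_RN_deriv_priors_finite]
  by (simp add: rd_def RN_deriv_nn_integral ac_P sets_P ac_Q sets_Q mult.commute)

lemma hypH2_imp_evidence_bhattacharyya_le:
  assumes "hypH2 g \<nu> P Q" "g \<in> borel_measurable \<nu>"
    and "(\<integral>\<^sup>+x. g x \<partial>P) \<noteq> \<top>" "(\<integral>\<^sup>+x. g x \<partial>Q) \<noteq> \<top>"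
  shows "esqrt ((\<integral>\<^sup>+x. g x \<partial>P) * (\<integral>\<^sup>+x. g x \<partial>Q)) * bhattacharyya \<nu> (RN_deriv \<nu> P) (RN_deriv \<nu> Q)
    \<le> (\<integral>\<^sup>+x. g x * esqrt (RN_deriv \<nu> P x * RN_deriv \<nu> Q x) \<partial>\<nu>)"
proof -
  define S where "S = esqrt ((\<integral>\<^sup>+x. g x \<partial>P) * (\<integral>\<^sup>+x. g x \<partial>Q))"
  define BC where "BC = bhattacharyya \<nu> (RN_deriv \<nu> P) (RN_deriv \<nu> Q)"
  define I where "I = (\<integral>\<^sup>+x. g x * esqrt (RN_deriv \<nu> P x * RN_deriv \<nu> Q x) \<partial>\<nu>)"
  define X where "X x = ennreal ((sqrt (rd \<nu> P x) - sqrt (rd \<nu> Q x))\<^sup>2)" for x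
  define D GD where "D = (\<integral>\<^sup>+x. X x \<partial>\<nu>)" and "GD = (\<integral>\<^sup>+x. g x * X x \<partial>\<nu>)"
  have D: "D + 2 * BC = 2"
    using nn_integral_weighted_hellinger_priors[of "\<lambda>_. 1"]
    by (simp add: D_def X_def BC_def bhattacharyya_def one_add_one
        prob_space.emeasure_space_1[OF prob_space_P] prob_space.emeasure_space_1[OF prob_space_Q])
  have GD: "GD + 2 * I = (\<integral>\<^sup>+x. g x \<partial>P) + (\<integral>\<^sup>+x. g x \<partial>Q)"
    using nn_integral_weighted_hellinger_priors[OF assms(2)] by (simp add: GD_def X_def I_def)
  have "GD \<le> (\<integral>\<^sup>+x. g x \<partial>\<nu>) * D" "(\<integral>\<^sup>+x. g x \<partial>\<nu>) \<le> S"
    using assms(1,3,4)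
    by (simp_all add: hypH2_def GD_def D_def X_def S_def esqrt_mult_eq_sqrt_enn2real)
  then have GD_le: "GD \<le> S * D"
    by (meson mult_right_mono order_trans zero_le)
  have "S \<noteq> \<top>" "D \<noteq> \<top>"
    using assms(3,4) D by (auto simp: S_def esqrt_def ennreal_mult_eq_top_iff)
  have "S * D + 2 * (S * BC) = S * (D + 2 * BC)"
    by (simp add: distrib_left mult.left_commute)
  also have "\<dots> = 2 * S"
    using D by (simp add: mult.commute)
  also have "\<dots> \<le> (\<integral>\<^sup>+x. g x \<partial>P) + (\<integral>\<^sup>+x. g x \<partial>Q)"
    unfolding S_def by (rule esqrt_mult_le_add)
  also have "\<dots> \<le> S * D + 2 * I"
    unfolding GD[symmetric] using GD_le by (rule add_right_mono)
  finally have "2 * (S * BC) \<le> 2 * I"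
    using \<open>S \<noteq> \<top>\<close> \<open>D \<noteq> \<top>\<close> by (simp add: ennreal_add_left_cancel_le ennreal_mult_eq_top_iff)
  then show ?thesis
    by (simp add: S_def BC_def I_def ennreal_mult_le_mult_iff)
qed

lemma hellinger_normalize_density_le:
  assumes "sigma_finite_measure L"
    and [measurable]: "F \<in> borel_measurable L" "G \<in> borel_measurable L" "g \<in> borel_measurable \<nu>"
    and hyp: "hypH1 g \<nu> P Q \<or> hypH2 g \<nu> P Q"
    and evidence_F: "evidence (density L F) = (\<integral>\<^sup>+x. g x \<partial>P)"
    and evidence_G: "evidence (density L G) = (\<integral>\<^sup>+x. g x \<partial>Q)"
    and Z_F: "0 < evidence (density L F)" "evidence (density L F) < \<top>"
    and Z_G: "0 < evidence (density L G)" "evidence (density L G) < \<top>"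
    and transition:
      "(\<integral>\<^sup>+x. g x * esqrt (RN_deriv \<nu> P x * RN_deriv \<nu> Q x) \<partial>\<nu>) \<le> bhattacharyya L F G"
  shows "hellinger (normalize (density L F)) (normalize (density L G)) \<le> hellinger P Q"
proof -
  define ZP ZQ where "ZP = evidence (density L F)" and "ZQ = evidence (density L G)"
  define BC where "BC = bhattacharyya \<nu> (RN_deriv \<nu> P) (RN_deriv \<nu> Q)"
  note posterior = hellinger_normalize_density[OF assms(1-3) Z_F Z_G, folded ZP_def ZQ_def]
  have "ZP \<noteq> \<top>" "ZQ \<noteq> \<top>"
    using Z_F Z_G by (simp_all add: ZP_def ZQ_def)
  then have "esqrt (ZP * ZQ) * BC \<le> (\<integral>\<^sup>+x. g x * esqrt (RN_deriv \<nu> P x * RN_deriv \<nu> Q x) \<partial>\<nu>)"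
    unfolding ZP_def ZQ_def BC_def evidence_F evidence_G
    using hyp hypH1_imp_evidence_bhattacharyya_le hypH2_imp_evidence_bhattacharyya_le[OF _ assms(4)]
    by (elim disjE) simp_all
  also note transition
  finally have "esqrt (1 / ZP * (1 / ZQ)) * (esqrt (ZP * ZQ) * BC)
      \<le> esqrt (1 / ZP * (1 / ZQ)) * bhattacharyya L F G"
    by (rule mult_left_mono) simp
  moreover have "1 / ZP * (1 / ZQ) * (ZP * ZQ) = (ZP / ZP) * (ZQ / ZQ)"
    by (simp add: divide_ennreal_def mult_ac)
  then have "esqrt (1 / ZP * (1 / ZQ)) * esqrt (ZP * ZQ) = 1"
    using Z_F Z_G by (simp add: esqrt_mult[symmetric] ZP_def ZQ_def)
  ultimately have "BC \<le> esqrt (1 / ZP * (1 / ZQ)) * bhattacharyya L F G"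
    by (simp add: mult.assoc[symmetric])
  then have "enn2real BC \<le> enn2real (esqrt (1 / ZP * (1 / ZQ)) * bhattacharyya L F G)"
    using posterior(2) ennreal_one_less_top by (intro enn2real_mono) (auto intro: le_less_trans)
  then show ?thesis
    by (simp add: posterior(1) hellinger_priors BC_def)
qed

end

section \<open>Transition kernels and the three problem types\<close>

lemma measurable_compose_case_prod3:
  fixes T :: "'a::second_countable_topology \<Rightarrow> 'b::second_countable_topology
    \<Rightarrow> 'c::second_countable_topology \<Rightarrow> real"
  assumes "(\<lambda>(a, b, c). T a b c) \<in> borel_measurable borel"
    and "f \<in> borel_measurable M" "g \<in> borel_measurable M" "k \<in> borel_measurable M"
  shows "(\<lambda>u. T (f u) (g u) (k u)) \<in> borel_measurable M"
  using measurable_compose[OF borel_measurable_Pair[OF assms(2) borel_measurable_Pair[OF assms(3,4)]]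
      assms(1)]
  by simp

lemma nn_integral_lborel_pair:
  fixes f :: "'a::euclidean_space \<times> 'b::euclidean_space \<Rightarrow> ennreal"
  assumes "f \<in> borel_measurable borel"
  shows "(\<integral>\<^sup>+z. f z \<partial>lborel) = (\<integral>\<^sup>+w. \<integral>\<^sup>+x. f (x, w) \<partial>lborel \<partial>lborel)"
  using lborel_pair.nn_integral_snd[of f] assms by (simp add: lborel_prod)

lemma nn_integral_kernel_swap:
  fixes K :: "'a \<Rightarrow> 'b \<Rightarrow> real" and H :: "'a \<Rightarrow> real"
  assumes "sigma_finite_measure N" "sigma_finite_measure M"
    and [measurable]: "(\<lambda>(x, x'). K x x') \<in> borel_measurable (N \<Otimes>\<^sub>M M)"
      "H \<in> borel_measurable N" "s \<in> borel_measurable M"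
    and nonneg: "\<And>x. 0 \<le> H x" "\<And>x x'. 0 \<le> K x x'"
  shows "(\<integral>\<^sup>+x. ennreal (H x) * (\<integral>\<^sup>+x'. ennreal (K x x') * s x' \<partial>M) \<partial>N)
    = (\<integral>\<^sup>+x'. (\<integral>\<^sup>+x. ennreal (H x * K x x') \<partial>N) * s x' \<partial>M)"
proof -
  interpret pair_sigma_finite N M
    using assms(1,2) by (rule pair_sigma_finite.intro)
  have "(\<integral>\<^sup>+x. ennreal (H x) * (\<integral>\<^sup>+x'. ennreal (K x x') * s x' \<partial>M) \<partial>N)
      = (\<integral>\<^sup>+x. \<integral>\<^sup>+x'. ennreal (H x * K x x') * s x' \<partial>M \<partial>N)"
    by (auto intro!: nn_integral_cong
        simp: nn_integral_cmult[symmetric] ennreal_mult nonneg mult.assoc)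
  also have "\<dots> = (\<integral>\<^sup>+x'. \<integral>\<^sup>+x. ennreal (H x * K x x') * s x' \<partial>N \<partial>M)"
    by (rule Fubini'[symmetric]) measurable
  also have "\<dots> = (\<integral>\<^sup>+x'. (\<integral>\<^sup>+x. ennreal (H x * K x x') \<partial>N) * s x' \<partial>M)"
    by (auto intro!: nn_integral_cong simp: nn_integral_multc)
  finally show ?thesis .
qed

lemma bhattacharyya_kernel_ge:
  fixes K :: "'a \<Rightarrow> 'b \<Rightarrow> real" and H :: "'a \<Rightarrow> real"
  assumes "sigma_finite_measure N" "sigma_finite_measure M"
    and [measurable]: "(\<lambda>(x, x'). K x x') \<in> borel_measurable (N \<Otimes>\<^sub>M M)"
      "H \<in> borel_measurable N" "p \<in> borel_measurable M" "q \<in> borel_measurable M"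
    and nonneg: "\<And>x. 0 \<le> H x" "\<And>x x'. 0 \<le> K x x'"
  shows "(\<integral>\<^sup>+x'. (\<integral>\<^sup>+x. ennreal (H x * K x x') \<partial>N) * esqrt (p x' * q x') \<partial>M)
    \<le> bhattacharyya N (\<lambda>x. ennreal (H x) * (\<integral>\<^sup>+x'. ennreal (K x x') * p x' \<partial>M))
        (\<lambda>x. ennreal (H x) * (\<integral>\<^sup>+x'. ennreal (K x x') * q x' \<partial>M))"
proof -
  have "(\<integral>\<^sup>+x'. (\<integral>\<^sup>+x. ennreal (H x * K x x') \<partial>N) * esqrt (p x' * q x') \<partial>M)
      = (\<integral>\<^sup>+x. ennreal (H x) * (\<integral>\<^sup>+x'. ennreal (K x x') * esqrt (p x' * q x') \<partial>M) \<partial>N)"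
    by (rule nn_integral_kernel_swap[symmetric]) (simp_all add: assms)
  also have "\<dots> \<le> (\<integral>\<^sup>+x. ennreal (H x) * esqrt ((\<integral>\<^sup>+x'. ennreal (K x x') * p x' \<partial>M)
      * (\<integral>\<^sup>+x'. ennreal (K x x') * q x' \<partial>M)) \<partial>N)"
    by (intro nn_integral_mono mult_left_mono nn_integral_esqrt_mult_le) simp_all
  finally show ?thesis
    by (simp add: bhattacharyya_def esqrt_mult_mult_self)
qed

lemma IP_post_hellinger_le:
  fixes h :: "'y \<Rightarrow> 'x::polish_space \<Rightarrow> real"
  assumes model: "IP_model h y" and adm: "IP_adm h y P" "IP_adm h y Q"
    and \<nu>: "\<nu> \<in> Mbar_borel" and hyp: "hypH1 (IP_g h y) \<nu> P Q \<or> hypH2 (IP_g h y) \<nu> P Q"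
  shows "hellinger (IP_post h y P) (IP_post h y Q) \<le> hellinger P Q"
proof -
  have sets_\<nu>: "sets \<nu> = sets borel" and "sigma_finite_measure \<nu>"
    using \<nu> by (simp_all add: Mbar_borel_def)
  interpret dominated_priors \<nu> P Q
    using \<open>sigma_finite_measure \<nu>\<close> adm hyp sets_\<nu>
    by (auto simp: dominated_priors_def dominated_priors_axioms_def IP_adm_def hypH1_def hypH2_def)
  have [measurable]: "IP_g h y \<in> borel_measurable \<nu>"
    using model sets_\<nu> by (simp add: IP_model_def IP_g_def[abs_def] cong: measurable_cong_sets)
  have tilde: "IP_tilde h y R = density \<nu> (\<lambda>x. RN_deriv \<nu> R x * IP_g h y x)"
    if "absolutely_continuous \<nu> R" "sets R = sets \<nu>" for R
  proof -
    have "IP_tilde h y R = density (density \<nu> (RN_deriv \<nu> R)) (IP_g h y)"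
      by (simp add: IP_tilde_def IP_g_def[abs_def] density_RN_deriv[OF that])
    then show ?thesis
      by (simp add: density_density_eq)
  qed
  have evidence: "evidence (density \<nu> (\<lambda>x. RN_deriv \<nu> R x * IP_g h y x)) = (\<integral>\<^sup>+x. IP_g h y x \<partial>R)"
    if "absolutely_continuous \<nu> R" "sets R = sets \<nu>" for R
    by (simp add: evidence_density RN_deriv_nn_integral[OF that])
  have "bhattacharyya \<nu> (\<lambda>x. RN_deriv \<nu> P x * IP_g h y x) (\<lambda>x. RN_deriv \<nu> Q x * IP_g h y x)
      = (\<integral>\<^sup>+x. IP_g h y x * esqrt (RN_deriv \<nu> P x * RN_deriv \<nu> Q x) \<partial>\<nu>)"
    unfolding bhattacharyya_def by (metis esqrt_mult_mult_self mult.commute)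
  then show ?thesis
    unfolding IP_post_def tilde[OF ac_P sets_P] tilde[OF ac_Q sets_Q]
    using adm evidence[OF ac_P sets_P] evidence[OF ac_Q sets_Q]
    by (intro hellinger_normalize_density_le[OF sigma_finite_measure_axioms _ _ _ hyp])
      (simp_all add: IP_adm_def tilde[OF ac_P sets_P] tilde[OF ac_Q sets_Q])
qed

lemma SE_post_hellinger_le:
  fixes T :: "'a::euclidean_space \<Rightarrow> 'a \<Rightarrow> real" and h :: "'y \<Rightarrow> 'a \<Rightarrow> real"
  assumes model: "SE_model T h y" and adm: "SE_adm T h y P" "SE_adm T h y Q"
    and \<nu>: "\<nu> \<in> Mbar_borel" and hyp: "hypH1 (SE_g T h y) \<nu> P Q \<or> hypH2 (SE_g T h y) \<nu> P Q"
  shows "hellinger (SE_post T h y P) (SE_post T h y Q) \<le> hellinger P Q"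
proof -
  have sets_\<nu>: "sets \<nu> = sets borel" and "sigma_finite_measure \<nu>"
    using \<nu> by (simp_all add: Mbar_borel_def)
  interpret dominated_priors \<nu> P Q
    using \<open>sigma_finite_measure \<nu>\<close> adm hyp sets_\<nu>
    by (auto simp: dominated_priors_def dominated_priors_axioms_def SE_adm_def hypH1_def hypH2_def)
  have "sets (lborel \<Otimes>\<^sub>M \<nu>) = sets (borel :: ('a \<times> 'a) measure)"
    unfolding borel_prod[symmetric] by (rule sets_pair_measure_cong) (simp_all add: sets_\<nu>)
  then have [measurable]: "(\<lambda>(x, x'). T x x') \<in> borel_measurable (lborel \<Otimes>\<^sub>M \<nu>)"
    using model by (simp add: SE_model_def cong: measurable_cong_sets)
  have [measurable]: "h y \<in> borel_measurable lborel" and nonneg: "\<And>x. 0 \<le> h y x" "\<And>x x'. 0 \<le> T x x'"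
    using model by (simp_all add: SE_model_def)
  have [measurable]: "SE_g T h y \<in> borel_measurable \<nu>"
    unfolding SE_g_def[abs_def] by measurable
  define F where "F R x = ennreal (h y x) * (\<integral>\<^sup>+x'. ennreal (T x x') * RN_deriv \<nu> R x' \<partial>\<nu>)" for R x
  have [measurable]: "F R \<in> borel_measurable lborel" for R
    unfolding F_def[abs_def] by measurable
  have tilde: "SE_tilde T h y R = density lborel (F R)"
    if "absolutely_continuous \<nu> R" "sets R = sets \<nu>" for R
    unfolding SE_tilde_def F_def[abs_def] by (simp add: RN_deriv_nn_integral[OF that] mult.commute)
  have evidence: "evidence (density lborel (F R)) = (\<integral>\<^sup>+x. SE_g T h y x \<partial>R)"
    if "absolutely_continuous \<nu> R" "sets R = sets \<nu>" for R
    using nn_integral_kernel_swap[OF lborel.sigma_finite_measure_axioms sigma_finite_measure_axioms,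
        of "\<lambda>x x'. T x x'" "h y" "RN_deriv \<nu> R"]
    by (simp add: evidence_density F_def RN_deriv_nn_integral[OF that] SE_g_def mult.commute nonneg)
  have "(\<integral>\<^sup>+x. SE_g T h y x * esqrt (RN_deriv \<nu> P x * RN_deriv \<nu> Q x) \<partial>\<nu>)
      \<le> bhattacharyya lborel (F P) (F Q)"
    using bhattacharyya_kernel_ge[OF lborel.sigma_finite_measure_axioms sigma_finite_measure_axioms,
        of "\<lambda>x x'. T x x'" "h y" "RN_deriv \<nu> P" "RN_deriv \<nu> Q"]
    by (simp add: F_def[abs_def] SE_g_def nonneg)
  then show ?thesis
    unfolding SE_post_def tilde[OF ac_P sets_P] tilde[OF ac_Q sets_Q]
    using adm evidence[OF ac_P sets_P] evidence[OF ac_Q sets_Q]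
    by (intro hellinger_normalize_density_le[OF lborel.sigma_finite_measure_axioms _ _ _ hyp])
      (simp_all add: SE_adm_def tilde[OF ac_P sets_P] tilde[OF ac_Q sets_Q])
qed

definition PS_density :: "('b::euclidean_space \<Rightarrow> 'b \<Rightarrow> 'w::euclidean_space \<Rightarrow> real)
    \<Rightarrow> ('y \<Rightarrow> 'b \<Rightarrow> 'w \<Rightarrow> real) \<Rightarrow> 'y \<Rightarrow> ('b \<times> 'w \<Rightarrow> ennreal) \<Rightarrow> 'b \<times> 'w \<Rightarrow> ennreal" where
  "PS_density T h y s =
    (\<lambda>(x, w). ennreal (h y x w) * (\<integral>\<^sup>+x'. ennreal (T x x' w) * s (x', w) \<partial>lborel))"

lemma PS_tilde_eq_density:
  "PS_tilde T h y \<mu> = density lborel (PS_density T h y (RN_deriv lborel \<mu>))"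
  by (simp add: PS_tilde_def PS_density_def)

lemma PS_model_measurable:
  fixes T :: "'b::euclidean_space \<Rightarrow> 'b \<Rightarrow> 'w::euclidean_space \<Rightarrow> real"
  assumes "PS_model T h y"
  shows "(\<lambda>(x, w). h y x w) \<in> borel_measurable (borel \<Otimes>\<^sub>M borel)"
    and "\<And>f g k M. f \<in> borel_measurable M \<Longrightarrow> g \<in> borel_measurable M \<Longrightarrow> k \<in> borel_measurable M
      \<Longrightarrow> (\<lambda>u. T (f u) (g u) (k u)) \<in> borel_measurable M"
  using assms measurable_compose_case_prod3[of T] by (simp_all add: PS_model_def borel_prod)

lemma borel_measurable_PS_density:
  assumes "PS_model T h y" and [measurable]: "s \<in> borel_measurable borel"
  shows "PS_density T h y s \<in> borel_measurable borel"
proof -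
  note [measurable] = PS_model_measurable[OF assms(1)]
  have "(\<lambda>z. ennreal (h y (fst z) (snd z))
      * (\<integral>\<^sup>+x'. ennreal (T (fst z) x' (snd z)) * s (x', snd z) \<partial>lborel))
      \<in> borel_measurable (borel \<Otimes>\<^sub>M borel)"
    by measurable
  then show ?thesis
    unfolding PS_density_def case_prod_beta borel_prod .
qed

lemma borel_measurable_PS_g:
  assumes "PS_model T h y"
  shows "PS_g T h y \<in> borel_measurable borel"
proof -
  note [measurable] = PS_model_measurable[OF assms]
  have "(\<lambda>z. \<integral>\<^sup>+xk. ennreal (h y xk (snd z) * T xk (fst z) (snd z)) \<partial>lborel)
      \<in> borel_measurable (borel \<Otimes>\<^sub>M borel)"
    by measurable
  then show ?thesis
    unfolding PS_g_def case_prod_beta borel_prod .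
qed

lemma nn_integral_PS_density:
  assumes model: "PS_model T h y" and [measurable]: "s \<in> borel_measurable borel"
  shows "(\<integral>\<^sup>+z. PS_density T h y s z \<partial>lborel) = (\<integral>\<^sup>+z. PS_g T h y z * s z \<partial>lborel)"
proof -
  note [measurable] = PS_model_measurable[OF model] borel_measurable_PS_g[OF model]
    borel_measurable_PS_density[OF model]
  have "(\<integral>\<^sup>+x. PS_density T h y s (x, w) \<partial>lborel)
      = (\<integral>\<^sup>+x'. PS_g T h y (x', w) * s (x', w) \<partial>lborel)" for w
    using nn_integral_kernel_swap[OF lborel.sigma_finite_measure_axioms
        lborel.sigma_finite_measure_axioms,
        of "\<lambda>x x'. T x x' w" "\<lambda>x. h y x w" "\<lambda>x'. s (x', w)"] model
    by (simp add: PS_density_def PS_g_def PS_model_def)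
  then show ?thesis
    by (simp add: nn_integral_lborel_pair)
qed

lemma PS_density_bhattacharyya_ge:
  assumes model: "PS_model T h y"
    and [measurable]: "p \<in> borel_measurable borel" "q \<in> borel_measurable borel"
  shows "(\<integral>\<^sup>+z. PS_g T h y z * esqrt (p z * q z) \<partial>lborel)
    \<le> bhattacharyya lborel (PS_density T h y p) (PS_density T h y q)"
proof -
  note [measurable] = PS_model_measurable[OF model] borel_measurable_PS_g[OF model]
    borel_measurable_PS_density[OF model]
  have "(\<integral>\<^sup>+x'. PS_g T h y (x', w) * esqrt (p (x', w) * q (x', w)) \<partial>lborel)
      \<le> (\<integral>\<^sup>+x. esqrt (PS_density T h y p (x, w) * PS_density T h y q (x, w)) \<partial>lborel)" for w
    using bhattacharyya_kernel_ge[OF lborel.sigma_finite_measure_axioms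
        lborel.sigma_finite_measure_axioms,
        of "\<lambda>x x'. T x x' w" "\<lambda>x. h y x w" "\<lambda>x'. p (x', w)" "\<lambda>x'. q (x', w)"] model
    by (simp add: PS_density_def PS_g_def PS_model_def bhattacharyya_def)
  then show ?thesis
    unfolding bhattacharyya_def by (simp add: nn_integral_lborel_pair nn_integral_mono)
qed

lemma PS_post_hellinger_le:
  fixes T :: "'b::euclidean_space \<Rightarrow> 'b \<Rightarrow> 'w::euclidean_space \<Rightarrow> real"
    and h :: "'y \<Rightarrow> 'b \<Rightarrow> 'w \<Rightarrow> real"
  assumes model: "PS_model T h y" and adm: "PS_adm T h y P" "PS_adm T h y Q"
    and \<nu>: "\<nu> \<in> Mbar_PS" and hyp: "hypH1 (PS_g T h y) \<nu> P Q \<or> hypH2 (PS_g T h y) \<nu> P Q"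
  shows "hellinger (PS_post T h y P) (PS_post T h y Q) \<le> hellinger P Q"
proof -
  have \<nu>_lborel: "\<nu> = lborel"
    using \<nu> by (simp add: Mbar_PS_def)
  interpret dominated_priors lborel P Q
    using adm lborel.sigma_finite_measure_axioms
    by (auto simp: dominated_priors_def dominated_priors_axioms_def PS_adm_def)
  note [measurable] = borel_measurable_PS_g[OF model] borel_measurable_PS_density[OF model]
  have evidence: "evidence (density lborel (PS_density T h y (RN_deriv lborel R)))
      = (\<integral>\<^sup>+x. PS_g T h y x \<partial>R)"
    if "absolutely_continuous lborel R" "sets R = sets lborel" for R
    using sigma_finite_measure.RN_deriv_nn_integral[OF lborel.sigma_finite_measure_axioms that]
    by (simp add: evidence_density nn_integral_PS_density[OF model] mult.commute)
  show ?thesis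
    unfolding PS_post_def PS_tilde_eq_density
    using adm evidence[OF ac_P sets_P] evidence[OF ac_Q sets_Q] hyp
      PS_density_bhattacharyya_ge[OF model, of "RN_deriv lborel P" "RN_deriv lborel Q"]
    by (intro hellinger_normalize_density_le[OF lborel.sigma_finite_measure_axioms])
      (simp_all add: PS_adm_def PS_tilde_eq_density \<nu>_lborel)
qed

theorem theorem4:
  shows
  "(\<forall>(h :: 'y \<Rightarrow> 'x::polish_space \<Rightarrow> real) y P Q.
      IP_model h y \<and> IP_adm h y P \<and> IP_adm h y Q \<and>
      (\<exists>\<nu>\<in>Mbar_borel. hypH1 (IP_g h y) \<nu> P Q \<or> hypH2 (IP_g h y) \<nu> P Q)
      \<longrightarrow> hellinger (IP_post h y P) (IP_post h y Q) \<le> hellinger P Q)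
   \<and>
   (\<forall>(T :: 'a::euclidean_space \<Rightarrow> 'a \<Rightarrow> real) (h :: 'y \<Rightarrow> 'a \<Rightarrow> real) y P Q.
      SE_model T h y \<and> SE_adm T h y P \<and> SE_adm T h y Q \<and>
      (\<exists>\<nu>\<in>Mbar_borel. hypH1 (SE_g T h y) \<nu> P Q \<or> hypH2 (SE_g T h y) \<nu> P Q)
      \<longrightarrow> hellinger (SE_post T h y P) (SE_post T h y Q) \<le> hellinger P Q)
   \<and>
   (\<forall>(T :: 'b::euclidean_space \<Rightarrow> 'b \<Rightarrow> 'w::euclidean_space \<Rightarrow> real)
       (h :: 'y \<Rightarrow> 'b \<Rightarrow> 'w \<Rightarrow> real) y P Q.
      PS_model T h y \<and> PS_adm T h y P \<and> PS_adm T h y Q \<and>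
      (\<exists>\<nu>\<in>Mbar_PS. hypH1 (PS_g T h y) \<nu> P Q \<or> hypH2 (PS_g T h y) \<nu> P Q)
      \<longrightarrow> hellinger (PS_post T h y P) (PS_post T h y Q) \<le> hellinger P Q)"
  by (intro conjI allI impI; elim conjE bexE)
    (rule IP_post_hellinger_le SE_post_hellinger_le PS_post_hellinger_le; assumption)+

end
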